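(* Let $n\ge 2$ be an integer, let $A$ be a $C^*$-algebra, and let $0<r<\frac{1}{2}$, $\theta\in[0,\infty)$ be real numbers. Suppose $f:A\to A$ satisfies $$\Big\|\mu f\Big(\frac{x+y}{2}\Big)+\mu f\Big(\frac{x-y}{2}\Big)-f(\mu x)+f(a^n)-\big(f(a)a^{n-1}+af(a)a^{n-2}+\cdots+a^{n-2}f(a)a+a^{n-1}f(a)\big)+f(w^* )-(f(w))^*\Big\|\le \theta(\|x\|^r\|y\|^r+\|a\|^{2r}+\|w\|^r)$$ for all $\mu\in\mathbb{T}$ and all $x,y,a,w\in A$. Then there exists a unique $*$-$n$-Jordan derivation $D:A\to A$ such that $$\|f(x)-D(x)\|\le \frac{3^r\theta}{2-2^r}\|x\|^{2r}$$ for all $x\in A$.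
   Context: $\mathbb{T}=\{\mu\in\mathbb{C}:|\mu|=1\}$. For an integer $n\ge 2$, an $n$-Jordan derivation on an algebra $A$ is a linear map $D:A\to A$ such that $D(a^n)=D(a)a^{n-1}+aD(a)a^{n-2}+\cdots+a^{n-2}D(a)a+a^{n-1}D(a)$ for all $a\in A$. On a $C^*$-algebra, a $*$-$n$-Jordan derivation is an $n$-Jordan derivation $D$ with $D(a^* )=(D(a))^*$ for all $a\in A$. *)

theory Defs
  imports "HOL-Analysis.Analysis"
begin

text \<open>Isabelle/HOL has no complex-vector-space
class, so complex scalar multiplication is an explicit operation compatible
with the real scaling.\<close>

class cstar_algebra = banach + real_normed_algebra +
  fixes cscale :: "complex \<Rightarrow> 'a \<Rightarrow> 'a"  (infixr "*\<^sub>C" 75)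
    and star :: "'a \<Rightarrow> 'a"
  assumes cscale_add_left: "(c + d) *\<^sub>C x = c *\<^sub>C x + d *\<^sub>C x"
    and cscale_add_right: "c *\<^sub>C (x + y) = c *\<^sub>C x + c *\<^sub>C y"
    and cscale_cscale: "c *\<^sub>C (d *\<^sub>C x) = (c * d) *\<^sub>C x"
    and cscale_one: "1 *\<^sub>C x = x"
    and cscale_of_real: "(complex_of_real t) *\<^sub>C x = t *\<^sub>R x"
    and norm_cscale: "norm (c *\<^sub>C x) = cmod c * norm x"
    and cscale_mult_left: "(c *\<^sub>C x) * y = c *\<^sub>C (x * y)"
    and cscale_mult_right: "x * (c *\<^sub>C y) = c *\<^sub>C (x * y)"
    and star_add: "star (x + y) = star x + star y"
    and star_cscale: "star (c *\<^sub>C x) = cnj c *\<^sub>C star x"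
    and star_mult: "star (x * y) = star y * star x"
    and star_star: "star (star x) = x"
    and cstar_identity: "norm (star x * x) = (norm x)\<^sup>2"

text \<open>Powers without a unit: lpow a k x = a^k x, rpow a k x = x a^k (k \<ge> 0),
so a^n = lpow a (n-1) a for n \<ge> 1.\<close>

definition lpow :: "'a::ring \<Rightarrow> nat \<Rightarrow> 'a \<Rightarrow> 'a" where
  "lpow a k = ((\<lambda>x. a * x) ^^ k)"

definition rpow :: "'a::ring \<Rightarrow> nat \<Rightarrow> 'a \<Rightarrow> 'a" where
  "rpow a k = ((\<lambda>x. x * a) ^^ k)"

definition apow :: "'a::ring \<Rightarrow> nat \<Rightarrow> 'a" where
  "apow a n = lpow a (n - 1) a"

text \<open>D(a) a^{n-1} + a D(a) a^{n-2} + ... + a^{n-1} D(a)\<close>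
definition jordan_sum :: "nat \<Rightarrow> ('a::ring \<Rightarrow> 'a) \<Rightarrow> 'a \<Rightarrow> 'a" where
  "jordan_sum n D a = (\<Sum>k<n. lpow a k (rpow a (n - 1 - k) (D a)))"

definition clinear_map :: "('a::cstar_algebra \<Rightarrow> 'a) \<Rightarrow> bool" where
  "clinear_map D \<longleftrightarrow> (\<forall>x y. D (x + y) = D x + D y) \<and> (\<forall>c x. D (c *\<^sub>C x) = c *\<^sub>C D x)"

definition n_jordan_derivation :: "nat \<Rightarrow> ('a::cstar_algebra \<Rightarrow> 'a) \<Rightarrow> bool" where
  "n_jordan_derivation n D \<longleftrightarrow> clinear_map D \<and> (\<forall>a. D (apow a n) = jordan_sum n D a)"

definition star_n_jordan_derivation :: "nat \<Rightarrow> ('a::cstar_algebra \<Rightarrow> 'a) \<Rightarrow> bool" where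
  "star_n_jordan_derivation n D \<longleftrightarrow> n_jordan_derivation n D \<and> (\<forall>a. D (star a) = star (D a))"

end

theory Submission
  imports Defs
begin

text \<open>Setting all variables but one to 0 in the hypothesis splits it into three separate
inequalities plus the exact identity \<open>f (\<mu> x) = 2 \<mu> f (x/2)\<close>. The latter makes \<open>f\<close> commute
with dilations by \<open>2\<^sup>k\<close>, while each of the three defects (of the midpoint equation, of the Jordan
identity, of the involution) grows at least linearly under such dilations and is bounded by a
power of the dilation factor smaller than one; hence all defects vanish and \<open>f\<close> itself is a
\<open>*\<close>-\<open>n\<close>-Jordan derivation, with approximation error zero. Uniqueness follows from the same
growth comparison applied to \<open>f - D\<close>.\<close>

lemma zero_if_doubling_bound:
  fixes z :: "'a::real_normed_vector"
  assumes bound: "\<And>k::nat. 2 ^ k * norm z \<le> K * (2 ^ k) powr s" and "s < 1"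
  shows "z = 0"
proof -
  define q :: real where "q = 2 powr (s - 1)"
  have q: "0 < q" "q < 1"
    using \<open>s < 1\<close> by (auto simp: q_def powr_less_one)
  have "norm z \<le> K * q ^ k" for k
  proof -
    have "((2::real) ^ k) powr s = 2 ^ k * q ^ k"
      by (simp add: q_def powr_realpow[symmetric] powr_powr powr_add[symmetric] algebra_simps)
    then show ?thesis
      using bound[of k] by (simp add: mult.left_commute)
  qed
  moreover have "(\<lambda>k. K * q ^ k) \<longlonglongrightarrow> 0"
    using LIMSEQ_power_zero[of q] q by (auto intro: tendsto_mult_right_zero)
  ultimately have "norm z \<le> 0"
    by (metis LIMSEQ_le_const)
  then show ?thesis by simp
qed

lemma sum_of_two_unit_complex:
  assumes "cmod z \<le> 2"
  obtains u v where "cmod u = 1" "cmod v = 1" "z = u + v"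
proof -
  define \<rho> where "\<rho> = cmod z"
  define w where "w = (if z = 0 then 1 else z / complex_of_real \<rho>)"
  define \<beta> where "\<beta> = sqrt (1 - \<rho>\<^sup>2 / 4)"
  have w: "cmod w = 1" "z = w * complex_of_real \<rho>"
    by (simp_all add: w_def \<rho>_def norm_divide)
  have "\<rho>\<^sup>2 \<le> 2\<^sup>2"
    using assms by (intro power_mono) (simp_all add: \<rho>_def)
  then have "\<beta>\<^sup>2 = 1 - \<rho>\<^sup>2 / 4"
    by (simp add: \<beta>_def)
  then have "cmod (Complex (\<rho>/2) \<beta>) = 1" "cmod (Complex (\<rho>/2) (-\<beta>)) = 1"
    by (simp_all add: cmod_def power_divide)
  moreover have "z = w * Complex (\<rho>/2) \<beta> + w * Complex (\<rho>/2) (-\<beta>)"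
    by (simp add: w(2) distrib_left[symmetric] complex_eq_iff)
  ultimately show ?thesis
    using that[of "w * Complex (\<rho>/2) \<beta>" "w * Complex (\<rho>/2) (-\<beta>)"] w(1)
    by (simp add: norm_mult)
qed

lemma cscale_minus_one [simp]: "(-1) *\<^sub>C (x::'a::cstar_algebra) = - x"
  using cscale_of_real[of "-1" x] by (simp add: scaleR_minus1_left)

lemma cscale_of_nat [simp]: "of_nat m *\<^sub>C (x::'a::cstar_algebra) = real m *\<^sub>R x"
  using cscale_of_real[of "real m" x] by simp

lemma star_zero [simp]: "star (0::'a::cstar_algebra) = 0"
  using star_add[of 0 0] by simp

lemma star_scaleR: "star (t *\<^sub>R (x::'a::cstar_algebra)) = t *\<^sub>R star x"
  using star_cscale[of "complex_of_real t" x] by (simp add: cscale_of_real)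

lemma cscale_hom_if_additive_unit_hom:
  fixes f :: "'a::cstar_algebra \<Rightarrow> 'b::cstar_algebra"
  assumes add: "\<And>x y. f (x + y) = f x + f y"
    and unit: "\<And>\<mu> x. cmod \<mu> = 1 \<Longrightarrow> f (\<mu> *\<^sub>C x) = \<mu> *\<^sub>C f x"
  shows "f (c *\<^sub>C x) = c *\<^sub>C f x"
proof -
  have f_of_nat: "f (real m *\<^sub>R x) = real m *\<^sub>R f x" for m x
  proof (induction m)
    case 0
    show ?case using add[of 0 0] by simp
  next
    case (Suc m)
    then show ?case by (simp add: add scaleR_left_distrib)
  qed
  \<comment> \<open>write \<open>c = N (u + v)\<close> with \<open>u, v\<close> unimodular and \<open>N\<close> a natural number\<close>
  define N :: nat where "N = nat \<lceil>cmod c\<rceil> + 1"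
  have "cmod c \<le> real N" "1 \<le> real N"
    unfolding N_def using of_nat_ceiling[of "cmod c"] by linarith+
  then have "cmod (c / of_nat N) \<le> 2"
    by (simp add: norm_divide divide_le_eq)
  then obtain u v where uv: "cmod u = 1" "cmod v = 1" "c / of_nat N = u + v"
    by (rule sum_of_two_unit_complex)
  then have c: "c = complex_of_real (real N) * (u + v)"
    using \<open>1 \<le> real N\<close> by (simp add: field_simps)
  have "f (c *\<^sub>C x) = f (real N *\<^sub>R (u *\<^sub>C x + v *\<^sub>C x))"
    by (simp add: c cscale_cscale[symmetric] cscale_add_left)
  also have "\<dots> = real N *\<^sub>R (u *\<^sub>C f x + v *\<^sub>C f x)"
    by (simp add: f_of_nat add unit uv)
  also have "\<dots> = c *\<^sub>C f x"
    by (simp add: c cscale_cscale[symmetric] cscale_add_left)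
  finally show ?thesis .
qed

lemma lpow_zero [simp]: "lpow a k (0::'a::ring) = 0"
  by (induction k) (simp_all add: lpow_def)

lemma rpow_zero [simp]: "rpow a k (0::'a::ring) = 0"
  by (induction k) (simp_all add: rpow_def)

lemma apow_zero [simp]: "apow (0::'a::ring) n = 0"
  by (simp add: apow_def)

lemma jordan_sum_zero: "D 0 = 0 \<Longrightarrow> jordan_sum n D (0::'a::ring) = 0"
  by (simp add: jordan_sum_def)

lemma lpow_scaleR:
  "lpow (s *\<^sub>R a) k (t *\<^sub>R x) = (s ^ k * t) *\<^sub>R lpow a k (x::'a::real_normed_algebra)"
  by (induction k) (simp_all add: lpow_def)

lemma rpow_scaleR:
  "rpow (s *\<^sub>R a) k (t *\<^sub>R x) = (s ^ k * t) *\<^sub>R rpow a k (x::'a::real_normed_algebra)"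
  by (induction k) (simp_all add: rpow_def)

lemma apow_scaleR:
  "1 \<le> n \<Longrightarrow> apow (t *\<^sub>R (a::'a::real_normed_algebra)) n = t ^ n *\<^sub>R apow a n"
  by (cases n) (simp_all add: apow_def lpow_scaleR)

lemma jordan_sum_scaleR:
  assumes "\<And>x. D (t *\<^sub>R x) = t *\<^sub>R D x"
  shows "jordan_sum n D (t *\<^sub>R (a::'a::real_normed_algebra)) = t ^ n *\<^sub>R jordan_sum n D a"
proof -
  have "t ^ k * (t ^ (n - 1 - k) * t) = t ^ n" if "k < n" for k
  proof -
    have "k + (n - 1 - k) + 1 = n" using that by simp
    then show ?thesis by (metis power_add power_one_right mult.assoc)
  qed
  then show ?thesis
    unfolding jordan_sum_def scaleR_sum_right
    by (intro sum.cong) (simp_all add: assms lpow_scaleR rpow_scaleR)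
qed

lemma eq_if_homogeneous_and_close:
  fixes f g :: "'a::real_normed_vector \<Rightarrow> 'b::real_normed_vector"
  assumes f: "\<And>t x. f (t *\<^sub>R x) = t *\<^sub>R f x" and g: "\<And>t x. g (t *\<^sub>R x) = t *\<^sub>R g x"
    and close: "\<And>x. norm (f x - g x) \<le> C * norm x powr s" and "s < 1"
  shows "f = g"
proof
  fix x
  have "2 ^ k * norm (f x - g x) \<le> C * norm x powr s * (2 ^ k) powr s" for k :: nat
    using close[of "2 ^ k *\<^sub>R x"]
    by (simp add: f g powr_mult mult_ac flip: scaleR_diff_right)
  then show "f x = g x"
    using zero_if_doubling_bound[OF _ \<open>s < 1\<close>] by (metis eq_iff_diff_eq_0)
qed

lemma clinear_map_scaleR: "clinear_map D \<Longrightarrow> D (t *\<^sub>R x) = t *\<^sub>R D x"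
  unfolding clinear_map_def by (metis cscale_of_real)

locale approx_star_jordan_derivation =
  fixes f :: "'a::cstar_algebra \<Rightarrow> 'a" and n :: nat and r \<theta> :: real
  assumes n_ge_2: "2 \<le> n" and r_less_half: "r < 1/2"
    and stable: "\<And>\<mu> x y a w. cmod \<mu> = 1 \<Longrightarrow>
           norm (\<mu> *\<^sub>C f ((1/2) *\<^sub>R (x + y)) + \<mu> *\<^sub>C f ((1/2) *\<^sub>R (x - y)) - f (\<mu> *\<^sub>C x)
                 + f (apow a n) - jordan_sum n f a + f (star w) - star (f w))
           \<le> \<theta> * (norm x powr r * norm y powr r + norm a powr (2 * r) + norm w powr r)"
begin

lemma f_zero [simp]: "f 0 = 0"
proof -
  define R where "R = f (apow 0 n) - jordan_sum n f 0 + f (star 0) - star (f 0)"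
  have "f 0 + f 0 - f 0 + R = 0"
    using stable[of 1 0 0 0 0] by (simp add: R_def cscale_one algebra_simps)
  moreover have "- f 0 + - f 0 - f 0 + R = 0"
    using stable[of "-1" 0 0 0 0] unfolding R_def by (simp add: algebra_simps neg_eq_iff_add_eq_0)
  ultimately have "2 *\<^sub>R (2 *\<^sub>R f 0) = 0"
    by (simp add: scaleR_2 algebra_simps)
  then show ?thesis by simp
qed

lemma f_unit_scaled: "cmod \<mu> = 1 \<Longrightarrow> f (\<mu> *\<^sub>C x) = \<mu> *\<^sub>C f ((1/2) *\<^sub>R x) + \<mu> *\<^sub>C f ((1/2) *\<^sub>R x)"
  using stable[of \<mu> x 0 0 0] by (simp add: jordan_sum_zero)

lemma f_double: "f (2 *\<^sub>R x) = 2 *\<^sub>R f x"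
  using f_unit_scaled[of 1 "2 *\<^sub>R x"] by (simp add: cscale_one scaleR_2)

lemma f_unit_hom: "cmod \<mu> = 1 \<Longrightarrow> f (\<mu> *\<^sub>C x) = \<mu> *\<^sub>C f x"
  using f_unit_scaled[of \<mu> x] f_unit_scaled[of 1 x] by (simp add: cscale_one cscale_add_right)

lemma f_pow2: "f ((2 ^ k) *\<^sub>R x) = (2 ^ k) *\<^sub>R f x"
proof (induction k)
  case (Suc k)
  have "f (2 ^ Suc k *\<^sub>R x) = f (2 *\<^sub>R (2 ^ k *\<^sub>R x))" by simp
  also have "\<dots> = 2 *\<^sub>R (2 ^ k *\<^sub>R f x)" by (simp only: f_double Suc)
  also have "\<dots> = 2 ^ Suc k *\<^sub>R f x" by simp
  finally show ?case .
qed simp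

lemma midpoint_bound:
  "norm (f ((1/2) *\<^sub>R (x + y)) + f ((1/2) *\<^sub>R (x - y)) - f x)
     \<le> \<theta> * (norm x powr r * norm y powr r)"
  using stable[of 1 x y 0 0] by (simp add: cscale_one jordan_sum_zero)

lemma jordan_bound: "norm (f (apow a n) - jordan_sum n f a) \<le> \<theta> * norm a powr (2 * r)"
  using stable[of 1 0 0 a 0] by (simp add: cscale_one)

lemma star_bound: "norm (f (star w) - star (f w)) \<le> \<theta> * norm w powr r"
  using stable[of 1 0 0 0 w] by (simp add: cscale_one jordan_sum_zero)

lemma f_midpoint: "f ((1/2) *\<^sub>R (x + y)) + f ((1/2) *\<^sub>R (x - y)) = f x"
proof -
  let ?\<Delta> = "\<lambda>x y. f ((1/2) *\<^sub>R (x + y)) + f ((1/2) *\<^sub>R (x - y)) - f x"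
  have "2 ^ k * norm (?\<Delta> x y) \<le> \<theta> * (norm x powr r * norm y powr r) * (2 ^ k) powr (2 * r)"
    for k :: nat
  proof -
    have halves: "(1/2) *\<^sub>R (2 ^ k *\<^sub>R x + 2 ^ k *\<^sub>R y) = 2 ^ k *\<^sub>R ((1/2) *\<^sub>R (x + y))"
      "(1/2) *\<^sub>R (2 ^ k *\<^sub>R x - 2 ^ k *\<^sub>R y) = 2 ^ k *\<^sub>R ((1/2) *\<^sub>R (x - y))"
      by (simp_all add: scaleR_add_right scaleR_diff_right)
    have "?\<Delta> (2 ^ k *\<^sub>R x) (2 ^ k *\<^sub>R y) = 2 ^ k *\<^sub>R ?\<Delta> x y"
      unfolding halves f_pow2 by (simp add: algebra_simps)
    moreover have "((2::real) ^ k) powr (2 * r) = (2 ^ k) powr r * (2 ^ k) powr r"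
      by (simp add: powr_add[symmetric])
    ultimately show ?thesis
      using midpoint_bound[of "2 ^ k *\<^sub>R x" "2 ^ k *\<^sub>R y"] by (simp add: powr_mult mult_ac)
  qed
  then show ?thesis
    using zero_if_doubling_bound r_less_half by fastforce
qed

lemma f_add: "f (x + y) = f x + f y"
  using f_midpoint[of "x + y" "x - y"] by (simp add: algebra_simps flip: scaleR_2)

lemma f_cscale: "f (c *\<^sub>C x) = c *\<^sub>C f x"
  by (rule cscale_hom_if_additive_unit_hom[OF f_add f_unit_hom])

lemma f_scaleR: "f (t *\<^sub>R x) = t *\<^sub>R f x"
  using f_cscale[of "complex_of_real t"] by (simp add: cscale_of_real)

lemma f_jordan: "f (apow a n) = jordan_sum n f a"
proof -
  let ?\<Delta> = "\<lambda>a. f (apow a n) - jordan_sum n f a"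
  have "1 \<le> n" using n_ge_2 by simp
  have "2 ^ k * norm (?\<Delta> a) \<le> \<theta> * norm a powr (2 * r) * (2 ^ k) powr (2 * r)" for k :: nat
  proof -
    have "(2::real) ^ k \<le> (2 ^ k) ^ n"
      using power_increasing[OF \<open>1 \<le> n\<close>, of "(2::real) ^ k"] by simp
    then have "2 ^ k * norm (?\<Delta> a) \<le> (2 ^ k) ^ n * norm (?\<Delta> a)"
      by (rule mult_right_mono) simp
    also have "\<dots> = norm (?\<Delta> (2 ^ k *\<^sub>R a))"
      using \<open>1 \<le> n\<close> by (simp add: apow_scaleR jordan_sum_scaleR f_scaleR flip: scaleR_diff_right)
    also have "\<dots> \<le> \<theta> * norm (2 ^ k *\<^sub>R a) powr (2 * r)"
      by (rule jordan_bound)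
    also have "\<dots> = \<theta> * norm a powr (2 * r) * (2 ^ k) powr (2 * r)"
      by (simp add: powr_mult)
    finally show ?thesis .
  qed
  then show ?thesis
    using zero_if_doubling_bound r_less_half by fastforce
qed

lemma f_star: "f (star w) = star (f w)"
proof -
  have "2 ^ k * norm (f (star w) - star (f w)) \<le> \<theta> * norm w powr r * (2 ^ k) powr r" for k :: nat
    using star_bound[of "2 ^ k *\<^sub>R w"]
    by (simp add: star_scaleR f_scaleR powr_mult mult_ac flip: scaleR_diff_right)
  then show ?thesis
    using zero_if_doubling_bound r_less_half by fastforce
qed

lemma star_n_jordan_derivation: "star_n_jordan_derivation n f"
  unfolding star_n_jordan_derivation_def n_jordan_derivation_def clinear_map_def
  using f_add f_cscale f_jordan f_star by blast

end

theorem corollary2p8: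
  fixes f :: "'a::cstar_algebra \<Rightarrow> 'a" and n :: nat and r \<theta> :: real
  assumes "n \<ge> 2" and "0 < r" and "r < 1/2" and "\<theta> \<ge> 0"
    and "\<forall>\<mu> x y a w. cmod \<mu> = 1 \<longrightarrow>
           norm (\<mu> *\<^sub>C f ((1/2) *\<^sub>R (x + y)) + \<mu> *\<^sub>C f ((1/2) *\<^sub>R (x - y)) - f (\<mu> *\<^sub>C x)
                 + f (apow a n) - jordan_sum n f a + f (star w) - star (f w))
           \<le> \<theta> * (norm x powr r * norm y powr r + norm a powr (2 * r) + norm w powr r)"
  shows "\<exists>!D. star_n_jordan_derivation n D \<and>
           (\<forall>x. norm (f x - D x) \<le> 3 powr r * \<theta> / (2 - 2 powr r) * norm x powr (2 * r))"
proof -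
  interpret approx_star_jordan_derivation f n r \<theta>
    by unfold_locales (use assms in auto)
  define C where "C = 3 powr r * \<theta> / (2 - 2 powr r)"
  have "2 powr r < 2 powr 1"
    using assms by (intro powr_less_mono) auto
  then have "0 \<le> C"
    using assms by (simp add: C_def)
  show ?thesis
    unfolding C_def[symmetric]
  proof (rule ex1I[of _ f])
    show "star_n_jordan_derivation n f \<and> (\<forall>x. norm (f x - f x) \<le> C * norm x powr (2 * r))"
      using star_n_jordan_derivation \<open>0 \<le> C\<close> by simp
  next
    fix D assume D: "star_n_jordan_derivation n D \<and> (\<forall>x. norm (f x - D x) \<le> C * norm x powr (2 * r))"
    then have "clinear_map D"
      by (simp add: star_n_jordan_derivation_def n_jordan_derivation_def)
    then show "D = f"
      using D assms(3) clinear_map_scaleR f_scaleR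
      by (intro eq_if_homogeneous_and_close[where C = C and s = "2 * r"]) (auto simp: norm_minus_commute)
  qed
qed

end
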